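(* Let $(i,k)\in\mathcal I_1$. Then $F_{\le(i,k)}F_{st}=0$ for every $(s,t)\in\mathcal I_1$ with $(s,t)\preceq(i,k)$; equivalently, $F_{<(i,k)}F_{st}=0$ for every $(s,t)\in\mathcal I_1$ with $(s,t)\prec(i,k)$.
   Context: Let $m,n\ge 1$, let $q$ be an indeterminate, and let indices range over $[1,m+n]$. Put $q_i=q$ if $i\le m$ and $q_i=q^{-1}$ if $i>m$. Let $\mathcal I_0=\{(i,j):1\le i<j\le m \text{ or } m+1\le i<j\le m+n\}$, $\mathcal I_1=\{(i,j):1\le i\le m<j\le m+n\}$. The quantum supergroup $U_q=U_q(\mathfrak{gl}(m|n))$ is the associative $\mathbb C(q)$-superalgebra generated by $K_j^{\pm1}$ ($j\in[1,m+n]$) and $E_{i,i+1},F_{i,i+1}$ ($1\le i<m+n$), where $K_j^{\pm1}$ and $E_{i,i+1},F_{i,i+1}$ for $i\ne m$ are even and $E_{m,m+1},F_{m,m+1}$ are odd, subject to: $K_iK_j=K_jK_i$, $K_iK_i^{-1}=1$; $K_iE_{j,j+1}K_i^{-1}=q_i^{\delta_{ij}-\delta_{i,j+1}}E_{j,j+1}$, $K_iF_{j,j+1}K_i^{-1}=q_i^{-(\delta_{ij}-\delta_{i,j+1})}F_{j,j+1}$; $[E_{i,i+1},F_{j,j+1}]=\delta_{ij}\frac{K_iK_{i+1}^{-1}-K_i^{-1}K_{i+1}}{q_i-q_i^{-1}}$; $E_{m,m+1}^2=F_{m,m+1}^2=0$; $E_{i,i+1}E_{j,j+1}=E_{j,j+1}E_{i,i+1}$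 and $F_{i,i+1}F_{j,j+1}=F_{j,j+1}F_{i,i+1}$ for $|i-j|>1$; for $|i-j|=1$, $i\neq m$, and $X\in\{E,F\}$: $X_{i,i+1}^2X_{j,j+1}-(q+q^{-1})X_{i,i+1}X_{j,j+1}X_{i,i+1}+X_{j,j+1}X_{i,i+1}^2=0$; and $[E_{m-1,m+2},E_{m,m+1}]=[F_{m-1,m+2},F_{m,m+1}]=0$. Here for homogeneous $x,y$, $[x,y]=xy-(-1)^{\bar x\bar y}yx$. For $i<j$ with $j>i+1$, $E_{ij}=E_{ic}E_{cj}-q_c^{-1}E_{cj}E_{ic}$ and $F_{ij}=-q_cF_{ic}F_{cj}+F_{cj}F_{ic}$ for $i<c<j$ (independent of $c$); $E_{ij},F_{ij}$ are odd iff $(i,j)\in\mathcal I_1$. Order on $\mathcal I_1$: $(i,j)\prec(s,t)$ iff $j>t$, or $j=t$ and $i<s$. For $I\subseteq\mathcal I_1$, $F_I$ is the product of the $F_{ij}$, $(i,j)\in I$, taken in increasing $\prec$-order ($F_\emptyset=1$). For $(i,j)\in\mathcal I_1$, $F_{\ge(i,j)}$, $F_{>(i,j)}$, $F_{\le(i,j)}$, $F_{<(i,j)}$ denote $F_I$ for $I=\{(s,t)\in\mathcal I_1:(s,t)\succeq(i,j)\}$, $\{(s,t):(s,t)\succ(i,j)\}$, $\{(s,t):(s,t)\preceq(i,j)\}$, $\{(s,t):(s,t)\prec(i,j)\}$ respectively. *)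

theory Defs
  imports Complex_Main "HOL-Computational_Algebra.Polynomial" "HOL-Computational_Algebra.Fraction_Field"
begin

type_synonym Cq = "complex poly fract"

definition qv :: Cq where "qv = Fract [:0, 1:] 1"

definition qq :: "nat \<Rightarrow> nat \<Rightarrow> Cq" where
  "qq m i = (if i \<le> m then qv else inverse qv)"

definition delta :: "nat \<Rightarrow> nat \<Rightarrow> int" where
  "delta i j = (if i = j then 1 else 0)"

text \<open>Super bracket of homogeneous elements with parities px, py (True = odd).\<close>
definition sbr :: "bool \<Rightarrow> bool \<Rightarrow> 'a::ring_1 \<Rightarrow> 'a \<Rightarrow> 'a" where
  "sbr px py x y = (if px \<and> py then x * y + y * x else x * y - y * x)"

definition cq_algebra :: "(Cq \<Rightarrow> 'a::ring_1) \<Rightarrow> bool" where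
  "cq_algebra \<iota> \<longleftrightarrow> \<iota> 1 = 1 \<and> (\<forall>x y. \<iota> (x + y) = \<iota> x + \<iota> y) \<and>
     (\<forall>x y. \<iota> (x * y) = \<iota> x * \<iota> y) \<and> (\<forall>x a. \<iota> x * a = a * \<iota> x)"

text \<open>Generic E_{ij} for i<j (the paper's recursion with c = j-1):
  E_aux i d = E_{i,i+d}.  E i means E_{i,i+1}.\<close>
fun E_aux :: "(Cq \<Rightarrow> 'a::ring_1) \<Rightarrow> nat \<Rightarrow> (nat \<Rightarrow> 'a) \<Rightarrow> nat \<Rightarrow> nat \<Rightarrow> 'a" where
  "E_aux \<iota> m E i 0 = 1"
| "E_aux \<iota> m E i (Suc 0) = E i"
| "E_aux \<iota> m E i (Suc (Suc d)) =
     (let c = i + Suc d in E_aux \<iota> m E i (Suc d) * E c - \<iota> (inverse (qq m c)) * E c * E_aux \<iota> m E i (Suc d))"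

definition Eij :: "(Cq \<Rightarrow> 'a::ring_1) \<Rightarrow> nat \<Rightarrow> (nat \<Rightarrow> 'a) \<Rightarrow> nat \<Rightarrow> nat \<Rightarrow> 'a" where
  "Eij \<iota> m E i j = E_aux \<iota> m E i (j - i)"

text \<open>F_aux i d = F_{i,i+d}, via F_{ij} = -q_c F_{ic} F_{cj} + F_{cj} F_{ic} with c = j-1.\<close>
fun F_aux :: "(Cq \<Rightarrow> 'a::ring_1) \<Rightarrow> nat \<Rightarrow> (nat \<Rightarrow> 'a) \<Rightarrow> nat \<Rightarrow> nat \<Rightarrow> 'a" where
  "F_aux \<iota> m F i 0 = 1"
| "F_aux \<iota> m F i (Suc 0) = F i"
| "F_aux \<iota> m F i (Suc (Suc d)) =
     (let c = i + Suc d in - (\<iota> (qq m c) * F_aux \<iota> m F i (Suc d) * F c) + F c * F_aux \<iota> m F i (Suc d))"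

definition Fij :: "(Cq \<Rightarrow> 'a::ring_1) \<Rightarrow> nat \<Rightarrow> (nat \<Rightarrow> 'a) \<Rightarrow> nat \<Rightarrow> nat \<Rightarrow> 'a" where
  "Fij \<iota> m F i j = F_aux \<iota> m F i (j - i)"

text \<open>The defining relations of U_q(gl(m|n)) for elements K, Kinv (K_j^{-1}), E (E i = E_{i,i+1}),
  F (F i = F_{i,i+1}) of a C(q)-algebra.  Generator E i / F i is odd iff i = m.\<close>
definition uq_relations ::
  "nat \<Rightarrow> nat \<Rightarrow> (Cq \<Rightarrow> 'a::ring_1) \<Rightarrow> (nat \<Rightarrow> 'a) \<Rightarrow> (nat \<Rightarrow> 'a) \<Rightarrow> (nat \<Rightarrow> 'a) \<Rightarrow> (nat \<Rightarrow> 'a) \<Rightarrow> bool" where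
  "uq_relations m n \<iota> K Kinv E F \<longleftrightarrow>
    cq_algebra \<iota> \<and>
    (\<forall>i\<in>{1..m+n}. \<forall>j\<in>{1..m+n}. K i * K j = K j * K i) \<and>
    (\<forall>i\<in>{1..m+n}. K i * Kinv i = 1 \<and> Kinv i * K i = 1) \<and>
    (\<forall>i\<in>{1..m+n}. \<forall>j\<in>{1..<m+n}.
        K i * E j * Kinv i = \<iota> (qq m i powi (delta i j - delta i (j+1))) * E j \<and>
        K i * F j * Kinv i = \<iota> (qq m i powi (- (delta i j - delta i (j+1)))) * F j) \<and>
    (\<forall>i\<in>{1..<m+n}. \<forall>j\<in>{1..<m+n}.
        sbr (i = m) (j = m) (E i) (F j) =
          (if i = j then (K i * Kinv (i+1) - Kinv i * K (i+1)) * \<iota> (inverse (qq m i - inverse (qq m i)))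
           else 0)) \<and>
    E m * E m = 0 \<and> F m * F m = 0 \<and>
    (\<forall>i\<in>{1..<m+n}. \<forall>j\<in>{1..<m+n}. (i + 1 < j \<or> j + 1 < i) \<longrightarrow>
        E i * E j = E j * E i \<and> F i * F j = F j * F i) \<and>
    (\<forall>i\<in>{1..<m+n}. \<forall>j\<in>{1..<m+n}. (i + 1 = j \<or> j + 1 = i) \<and> i \<noteq> m \<longrightarrow>
        E i * E i * E j - \<iota> (qv + inverse qv) * E i * E j * E i + E j * E i * E i = 0 \<and>
        F i * F i * F j - \<iota> (qv + inverse qv) * F i * F j * F i + F j * F i * F i = 0) \<and>
    (2 \<le> m \<and> 2 \<le> n \<longrightarrow>
        sbr True True (Eij \<iota> m E (m-1) (m+2)) (E m) = 0 \<and>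
        sbr True True (Fij \<iota> m F (m-1) (m+2)) (F m) = 0)"

definition I1 :: "nat \<Rightarrow> nat \<Rightarrow> (nat \<times> nat) set" where
  "I1 m n = {(i, j). 1 \<le> i \<and> i \<le> m \<and> m < j \<and> j \<le> m + n}"

definition prec :: "nat \<times> nat \<Rightarrow> nat \<times> nat \<Rightarrow> bool" where
  "prec p r \<longleftrightarrow> snd p > snd r \<or> (snd p = snd r \<and> fst p < fst r)"

definition preceq :: "nat \<times> nat \<Rightarrow> nat \<times> nat \<Rightarrow> bool" where
  "preceq p r \<longleftrightarrow> prec p r \<or> p = r"

definition F_set :: "(Cq \<Rightarrow> 'a::ring_1) \<Rightarrow> nat \<Rightarrow> (nat \<Rightarrow> 'a) \<Rightarrow> (nat \<times> nat) set \<Rightarrow> 'a" where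
  "F_set \<iota> m F I = prod_list (map (\<lambda>(i, j). Fij \<iota> m F i j)
      (THE xs. set xs = I \<and> sorted_wrt prec xs))"

definition F_le :: "(Cq \<Rightarrow> 'a::ring_1) \<Rightarrow> nat \<Rightarrow> nat \<Rightarrow> (nat \<Rightarrow> 'a) \<Rightarrow> nat \<times> nat \<Rightarrow> 'a" where
  "F_le \<iota> m n F p = F_set \<iota> m F {r \<in> I1 m n. preceq r p}"

definition F_lt :: "(Cq \<Rightarrow> 'a::ring_1) \<Rightarrow> nat \<Rightarrow> nat \<Rightarrow> (nat \<Rightarrow> 'a) \<Rightarrow> nat \<times> nat \<Rightarrow> 'a" where
  "F_lt \<iota> m n F p = F_set \<iota> m F {r \<in> I1 m n. prec r p}"

end

theory Submission
  imports Defs "HOL-Library.Product_Lexorder"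
begin

(* Both index sets are initial segments of
   $(\mathcal I_1, \prec)$, and we prove the statement for the $\prec$-sorted product over any
   initial segment, by induction, adding the largest element $(i,k)$ last.  The inductive
   step rests on two facts about odd root vectors:
   - $F_{ik}^2 = 0$;
   - a straightening rule: for $(s,t) \prec (i,k)$,
     $F_{ik} F_{st} = F_{st} y + F_{it} z$ with $z = 0$ if $t = k$, and $(i,t) \prec (i,k)$ otherwise.
   These are derived from the defining relations by inductions on the length of the root
   intervals, using the recursions for $F_{ij}$ from both ends. *)

lemma commute_left_comm:
  fixes a b :: "'a::semigroup_mult"
  assumes "a * b = b * a"
  shows "a * (b * y) = b * (a * y)"
  by (metis assms mult.assoc)

lemma central_left_comm:
  fixes p :: "'a::semigroup_mult"
  assumes "\<And>x. p * x = x * p"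
  shows "u * (p * y) = p * (u * y)" "u * p = p * u"
  by (metis assms mult.assoc)+

lemma mult_eq_assoc:
  fixes x y z :: "'a::semigroup_mult"
  shows "x * y = z \<Longrightarrow> x * (y * w) = z * w"
  by (simp add: mult.assoc[symmetric])

lemma qv_nonzero: "qv \<noteq> 0"
  unfolding qv_def by (simp add: Zero_fract_def eq_fract)

(* $q + q^{-1} \ne 0$ in $\mathbb C(q)$, since $q^2 + 1$ is a nonzero polynomial.
   This makes the quantum integer $[2] = q + q^{-1}$ invertible. *)
lemma qv_plus_inverse_nonzero: "qv + inverse qv \<noteq> 0"
proof -
  have "[:0, 1:] * [:0, 1:] + 1 \<noteq> (0::complex poly)"
  proof
    assume "[:0, 1:] * [:0, 1:] + 1 = (0::complex poly)"
    then have "poly ([:0, 1:] * [:0, 1:] + 1) 0 = poly (0::complex poly) 0" by simp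
    then show False by simp
  qed
  then show ?thesis unfolding qv_def by (simp add: Zero_fract_def eq_fract)
qed

locale q_ring =
  fixes Q Qi :: "'a::ring_1"
  assumes Q_Qi_inverse: "Q * Qi = 1" "Qi * Q = 1"
    and Q_central: "Q * x = x * Q" and Qi_central: "Qi * x = x * Qi"
    and Q_sum_cancel: "(Q + Qi) * x = 0 \<Longrightarrow> x = 0"
begin

lemma qcomm: "x * (Q * y) = Q * (x * y)" "x * (Qi * y) = Qi * (x * y)" "x * Q = Q * x" "x * Qi = Qi * x"
  using central_left_comm[of Q] central_left_comm[of Qi] Q_central Qi_central by blast+

lemma Q_Qi_cancel: "Q * (Qi * x) = x" "Qi * (Q * x) = x"
  by (simp_all add: mult.assoc[symmetric] Q_Qi_inverse)

definition serre :: "'a \<Rightarrow> 'a \<Rightarrow> 'a" where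
  "serre x y = x * x * y - (Q + Qi) * x * y * x + y * x * x"

lemma serre_mult_right: "x * z = z * x \<Longrightarrow> serre x (y * z) = serre x y * z"
  unfolding serre_def by (simp add: algebra_simps commute_left_comm[of z x])

lemma serre_mult_left: "x * z = z * x \<Longrightarrow> serre x (z * y) = z * serre x y"
  unfolding serre_def by (simp add: algebra_simps commute_left_comm[of x z] qcomm(1,2)[of z])

lemma serre_diff: "serre x (a - b) = serre x a - serre x b"
  unfolding serre_def by (simp add: algebra_simps)

lemma serre_scalar:
  assumes "\<And>z. p * z = z * p"
  shows "serre x (p * a) = p * serre x a"
  unfolding serre_def
  by (simp add: algebra_simps central_left_comm[OF assms, of x] central_left_comm[OF assms, of Q]
      central_left_comm[OF assms, of Qi])

lemma Q_sum_cancel_eq: "(Q + Qi) * x = (Q + Qi) * y \<Longrightarrow> x = y"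
  using Q_sum_cancel[of "x - y"] by (simp add: algebra_simps)

lemma commute_q_commutator:
  fixes a x y r :: 'a
  assumes "a * x = x * a" and "a * y = y * a" and r: "\<And>z. r * z = z * r"
  shows "a * (x * y - r * y * x) = (x * y - r * y * x) * a"
  by (simp add: algebra_simps assms(1,2) commute_left_comm[OF assms(1)] commute_left_comm[OF assms(2)]
      central_left_comm[OF r, of a])

(* This is what makes $F_c$ commute with the root
   vectors $F_{st}$ when $s < c < c + 1 < t$. *)
lemma serre_nested_commutator:
  assumes p: "p = Q \<or> p = Qi"
    and Su: "serre v u = 0" and Sw: "serre v w = 0" and uw: "u * w = w * u"
  shows "v * (w * (v * u - p * u * v) - p * (v * u - p * u * v) * w) =
         (w * (v * u - p * u * v) - p * (v * u - p * u * v) * w) * v"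
proof -
  define r where "r = (if p = Q then Qi else Q)"
  have pr: "p * r = 1" "r * p = 1" and sum: "p + r = Q + Qi"
    using p Q_Qi_inverse by (auto simp: r_def add.commute)
  have pc: "p * x = x * p" and rc: "r * x = x * r" for x
    using p Q_central Qi_central by (auto simp: r_def)
  let ?T = "v * (w * (v * u - p * u * v) - p * (v * u - p * u * v) * w) -
         (w * (v * u - p * u * v) - p * (v * u - p * u * v) * w) * v"
  have pr2: "p * (r * y) = y" "r * (p * y) = y" for y
    by (simp_all add: mult.assoc[symmetric] pr)
  have "(p + r) * ?T = - (serre v w * u) + p * p * (u * serre v w) - p * p * (serre v u * w) + w * serre v u"
    unfolding serre_def sum[symmetric]
    by (simp add: algebra_simps pr2 central_left_comm[OF pc, of u] central_left_comm[OF pc, of v]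
        central_left_comm[OF pc, of w] central_left_comm[OF rc, of u] central_left_comm[OF rc, of v]
        central_left_comm[OF rc, of w] uw[symmetric] commute_left_comm[OF uw[symmetric]])
  then have "(Q + Qi) * ?T = 0" using Su Sw sum by simp
  then have "?T = 0" by (rule Q_sum_cancel)
  then show ?thesis by simp
qed

lemma serre_square_zero_consequences:
  assumes gg: "g * g = 0" and S: "serre b g = 0"
  shows "g * (b * (b * g)) = (Q + Qi) * (g * (b * (g * b)))"
    and "g * (b * (g * b)) = b * (g * (b * g))"
proof -
  have gg2: "g * (g * y) = 0" for y using gg by (simp add: mult.assoc[symmetric])
  have "g * serre b g = 0" "serre b g * g = 0" using S by simp_all
  then have a: "g * (b * (b * g)) - (Q + Qi) * (g * (b * (g * b))) = 0"
     and b: "(Q + Qi) * (b * (g * (b * g))) = g * (b * (b * g))"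
    unfolding serre_def by (simp_all add: algebra_simps gg gg2 qcomm[of g] qcomm[of b])
  from a show eq: "g * (b * (b * g)) = (Q + Qi) * (g * (b * (g * b)))" by simp
  have "(Q + Qi) * (g * (b * (g * b))) = (Q + Qi) * (b * (g * (b * g)))"
    by (simp only: b eq[symmetric])
  then show "g * (b * (g * b)) = b * (g * (b * g))" by (rule Q_sum_cancel_eq)
qed

(* This propagates nilpotency of the odd simple root vector to all odd root vectors. *)
lemma q_commutator_square_zero:
  assumes gg: "g * g = 0" and S: "serre b g = 0" and s: "s = Q \<or> s = Qi"
  shows "(b * g - s * g * b) * (b * g - s * g * b) = 0"
    and "(g * b - s * b * g) * (g * b - s * b * g) = 0"
proof -
  have gg2: "g * (g * y) = 0" for y using gg by (simp add: mult.assoc[symmetric])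
  note e = serre_square_zero_consequences[OF gg S]
  from s show "(b * g - s * g * b) * (b * g - s * g * b) = 0"
    by (auto simp: algebra_simps gg gg2 e qcomm[of g] qcomm[of b] Q_Qi_cancel)
  from s show "(g * b - s * b * g) * (g * b - s * b * g) = 0"
    by (auto simp: algebra_simps gg gg2 e qcomm[of g] qcomm[of b] Q_Qi_cancel)
qed

lemma skew_commute_extend:
  fixes g f H lam r :: 'a
  assumes gf: "g * f = f * g" and gH: "g * H = lam * (H * g)"
    and lc: "\<And>z. lam * z = z * lam" and rc: "\<And>z. r * z = z * r"
  shows "g * (f * H - r * H * f) = lam * ((f * H - r * H * f) * g)"
    and "g * (H * f - r * f * H) = lam * ((H * f - r * f * H) * g)"
proof -
  have lr: "lam * (r * w) = r * (lam * w)" for w by (metis lc mult.assoc)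
  note rules = algebra_simps gf commute_left_comm[OF gf] gH mult_eq_assoc[OF gH]
    central_left_comm[OF lc, of g] central_left_comm[OF lc, of f] central_left_comm[OF lc, of H]
    central_left_comm[OF rc, of g] central_left_comm[OF rc, of f] central_left_comm[OF rc, of H] lr
  show "g * (f * H - r * H * f) = lam * ((f * H - r * H * f) * g)" by (simp add: rules)
  show "g * (H * f - r * f * H) = lam * ((H * f - r * f * H) * g)" by (simp add: rules)
qed

(* Base case of the cross relation: the commutator identity for the four odd root
   vectors around the odd simple root, obtained from $F_m^2 = 0$ and the
   super Serre relation $[F_{m-1,m+2}, F_m] = 0$. *)
lemma cross_relation_base:
  assumes aa: "a * a = 0" and xz: "x * z = z * x"
    and hL: "L = a * x - Q * x * a" and hR: "R = z * a - Qi * a * z" and hO: "Ob = z * L - Qi * L * z"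
    and hyp: "Ob * a + a * Ob = 0"
  shows "L * R + R * L = (Qi - Q) * Ob * a"
proof -
  have aa2: "a * (a * y) = 0" for y using aa by (simp add: mult.assoc[symmetric])
  have "L * R + R * L - (Qi - Q) * Ob * a = - Qi * (Ob * a + a * Ob)"
    unfolding hO hL hR
    by (simp add: algebra_simps aa aa2 xz commute_left_comm[OF xz] qcomm[of a] qcomm[of x]
        qcomm[of z] Q_Qi_cancel)
  then show ?thesis using hyp by simp
qed

(* Extending the cross relation one step to the right (adding a column $k+1$). *)
lemma cross_relation_step_right:
  assumes hA: "A = y * a0 - Qi * a0 * y" and hO0: "O0 = y * L0 - Qi * L0 * y"
    and hA': "A' = z * A - Qi * A * z" and hO: "Ob = z * O0 - Qi * O0 * z"
    and zL: "z * L0 = L0 * z" and za: "z * a0 = a0 * z"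
    and yA': "y * A' = A' * y" and yO: "y * Ob = Ob * y"
    and IH: "L0 * A + A * L0 = (Qi - Q) * O0 * a0"
  shows "O0 * A' + A' * O0 = (Qi - Q) * Ob * A"
proof -
  have s1: "L0 * A' + A' * L0 = z * (L0 * A + A * L0) - Qi * (L0 * A + A * L0) * z"
    unfolding hA' by (simp add: algebra_simps Q_Qi_cancel zL commute_left_comm[OF zL] qcomm[of L0] qcomm[of z])
  also have "\<dots> = (Qi - Q) * Ob * a0"
    unfolding IH hO by (simp add: algebra_simps Q_Qi_cancel za[symmetric] commute_left_comm[OF za[symmetric]]
      qcomm[of z] qcomm[of O0] qcomm[of a0])
  finally have s2: "L0 * A' + A' * L0 = (Qi - Q) * Ob * a0" .
  have "O0 * A' + A' * O0 = y * (L0 * A' + A' * L0) - Qi * (L0 * A' + A' * L0) * y"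
    unfolding hO0 by (simp add: algebra_simps Q_Qi_cancel yA'[symmetric] commute_left_comm[OF yA'[symmetric]]
      qcomm[of y] qcomm[of L0] qcomm[of A'])
  also have "\<dots> = (Qi - Q) * Ob * A"
    unfolding s2 hA by (simp add: algebra_simps Q_Qi_cancel yO commute_left_comm[OF yO]
      qcomm[of y] qcomm[of Ob] qcomm[of a0])
  finally show ?thesis .
qed

(* Extending the cross relation one step to the left (adding a row $i$). *)
lemma cross_relation_step_left:
  assumes hO: "O0 = C * x - Q * x * C" and hD: "D = B * w - Q * w * B"
    and hP: "P = D * x - Q * x * D" and hE': "Ep = Eb * w - Q * w * Eb"
    and wO: "w * O0 = O0 * w" and wP: "w * P = P * w" and xB: "x * B = B * x" and xE: "x * Eb = Eb * x"
    and IH: "C * B + B * C = (Qi - Q) * D * Eb"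
  shows "O0 * D + D * O0 = (Qi - Q) * P * Ep"
proof -
  have "O0 * B + B * O0 = (C * B + B * C) * x - Q * x * (C * B + B * C)"
    unfolding hO by (simp add: algebra_simps Q_Qi_cancel xB[symmetric] commute_left_comm[OF xB[symmetric]]
      qcomm[of x] qcomm[of B] qcomm[of C])
  also have "\<dots> = (Qi - Q) * P * Eb"
    unfolding IH hP by (simp add: algebra_simps Q_Qi_cancel xE[symmetric] commute_left_comm[OF xE[symmetric]]
      qcomm[of x] qcomm[of D] qcomm[of Eb])
  finally have s1: "O0 * B + B * O0 = (Qi - Q) * P * Eb" .
  have "O0 * D + D * O0 = (O0 * B + B * O0) * w - Q * w * (O0 * B + B * O0)"
    unfolding hD by (simp add: algebra_simps Q_Qi_cancel wO commute_left_comm[OF wO]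
      qcomm[of w] qcomm[of B] qcomm[of O0])
  also have "\<dots> = (Qi - Q) * P * Ep"
    unfolding s1 hE' by (simp add: algebra_simps Q_Qi_cancel wP commute_left_comm[OF wP]
      qcomm[of w] qcomm[of P] qcomm[of Eb])
  finally show ?thesis .
qed

(* The cross relation together with a same-column relation yields an
   anticommutation of the two "outer" root vectors. *)
lemma anticommute_of_cross_relation:
  assumes hA': "A' = z * A - Qi * A * z" and hO: "Ob = z * O0 - Qi * O0 * z"
    and AO: "A * O0 = (- Q) * (O0 * A)" and CB: "O0 * A' + A' * O0 = (Qi - Q) * Ob * A"
  shows "A * Ob + Ob * A = 0"
proof -
  have "A * Ob + Ob * A = - Q * (O0 * A' + A' * O0 - (Qi - Q) * Ob * A)
      - Qi * ((A * O0 + Q * (O0 * A)) * z) + Q * (z * (A * O0 + Q * (O0 * A)))"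
    unfolding hA' hO
    by (simp add: algebra_simps qcomm[of A] qcomm[of O0] qcomm[of z] Q_Qi_cancel)
  also have "\<dots> = 0" using AO CB by simp
  finally show ?thesis .
qed

(* Propagation of the crossing relation when the column of the right factor grows. *)
lemma crossing_relation_step_right:
  assumes fg: "f * g = g * f" and fK: "f * Kk = Kk * f"
    and hH: "H' = f * H - Qi * H * f" and hJ: "J' = f * J - Qi * J * f"
    and ih: "g * H = (- 1) * (H * g) + (Qi - Q) * J * Kk"
  shows "g * H' = (- 1) * (H' * g) + (Qi - Q) * J' * Kk"
proof -
  have ih': "g * H = (Qi - Q) * (J * Kk) - H * g" using ih by (simp add: mult.assoc)
  show ?thesis unfolding hH hJ
    by (simp add: algebra_simps fg[symmetric] commute_left_comm[OF fg[symmetric]] fK[symmetric] commute_left_comm[OF fK[symmetric]]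
        ih' mult_eq_assoc[OF ih']
        qcomm[of f] qcomm[of g] qcomm[of H] qcomm[of J] qcomm[of Kk] Q_Qi_cancel)
qed

(* Propagation of the crossing relation when the row of the left factor decreases. *)
lemma crossing_relation_step_left:
  assumes fH: "f * H = H * f" and fK: "f * Kk = Kk * f"
    and hg: "g = g' * f - Q * f * g'" and hJ: "J = J' * f - Q * f * J'"
    and ih: "g' * H = (- 1) * (H * g') + (Qi - Q) * J' * Kk"
  shows "g * H = (- 1) * (H * g) + (Qi - Q) * J * Kk"
proof -
  have ih': "g' * H = (Qi - Q) * (J' * Kk) - H * g'" using ih by (simp add: mult.assoc)
  show ?thesis unfolding hg hJ
    by (simp add: algebra_simps fH commute_left_comm[OF fH] fK[symmetric] commute_left_comm[OF fK[symmetric]]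
        ih' mult_eq_assoc[OF ih']
        qcomm[of f] qcomm[of g'] qcomm[of H] qcomm[of J'] qcomm[of Kk] Q_Qi_cancel)
qed

end

locale UQ =
  fixes m n :: nat and \<iota> :: "Cq \<Rightarrow> 'a::ring_1" and K Kinv E F :: "nat \<Rightarrow> 'a"
  assumes relations: "uq_relations m n \<iota> K Kinv E F"
begin

abbreviation N :: nat where "N \<equiv> m + n"

abbreviation Fr :: "nat \<Rightarrow> nat \<Rightarrow> 'a" where "Fr i j \<equiv> Fij \<iota> m F i j"

definition Q :: 'a where "Q = \<iota> qv"
definition Qi :: 'a where "Qi = \<iota> (inverse qv)"

lemma iota_hom: "\<iota> 1 = 1" "\<iota> (x + y) = \<iota> x + \<iota> y" "\<iota> (x * y) = \<iota> x * \<iota> y" "\<iota> x * a = a * \<iota> x"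
proof -
  have "cq_algebra \<iota>" using relations unfolding uq_relations_def by blast
  then show "\<iota> 1 = 1" "\<iota> (x + y) = \<iota> x + \<iota> y" "\<iota> (x * y) = \<iota> x * \<iota> y" "\<iota> x * a = a * \<iota> x"
    unfolding cq_algebra_def by blast+
qed

sublocale q_ring Q Qi
proof
  show "Q * Qi = 1" "Qi * Q = 1"
    unfolding Q_def Qi_def using qv_nonzero by (simp_all flip: iota_hom(3) add: iota_hom(1))
  show "Q * x = x * Q" "Qi * x = x * Qi" for x
    unfolding Q_def Qi_def by (rule iota_hom(4))+
  show "x = 0" if "(Q + Qi) * x = 0" for x
  proof -
    have "\<iota> (inverse (qv + inverse qv)) * (Q + Qi) = 1"
      unfolding Q_def Qi_def using qv_plus_inverse_nonzero by (simp flip: iota_hom(2,3) add: iota_hom(1))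
    then have "x = \<iota> (inverse (qv + inverse qv)) * ((Q + Qi) * x)"
      by (simp add: mult.assoc[symmetric])
    then show "x = 0" using that by simp
  qed
qed

definition q_of :: "nat \<Rightarrow> 'a" where "q_of c = (if c \<le> m then Q else Qi)"

lemma q_of_le: "c \<le> m \<Longrightarrow> q_of c = Q" and q_of_gt: "m < c \<Longrightarrow> q_of c = Qi"
  by (simp_all add: q_of_def)

lemma q_of_cases: "q_of c = Q \<or> q_of c = Qi"
  by (simp add: q_of_def)

lemma q_of_central: "q_of c * z = z * q_of c"
  using Q_central Qi_central by (simp add: q_of_def)

lemma q_of_left_comm: "x * (q_of c * y) = q_of c * (x * y)" "x * q_of c = q_of c * x"
  by (rule central_left_comm[OF q_of_central])+

lemma F_odd_square: "F m * F m = 0"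
  using relations unfolding uq_relations_def by blast

lemma F_far_commute:
  "1 \<le> i \<Longrightarrow> i < N \<Longrightarrow> 1 \<le> j \<Longrightarrow> j < N \<Longrightarrow> i + 1 < j \<or> j + 1 < i \<Longrightarrow> F i * F j = F j * F i"
  using relations unfolding uq_relations_def by auto

lemma F_serre:
  assumes "1 \<le> i" "i < N" "1 \<le> j" "j < N" "i + 1 = j \<or> j + 1 = i" "i \<noteq> m"
  shows "serre (F i) (F j) = 0"
proof -
  have "F i * F i * F j - \<iota> (qv + inverse qv) * F i * F j * F i + F j * F i * F i = 0"
    using relations assms unfolding uq_relations_def by auto
  then show ?thesis unfolding serre_def by (simp add: iota_hom(2) Q_def Qi_def)
qed

lemma F_odd_super_serre: "2 \<le> m \<Longrightarrow> 2 \<le> n \<Longrightarrow> Fr (m - 1) (m + 2) * F m + F m * Fr (m - 1) (m + 2) = 0"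
  using relations unfolding uq_relations_def sbr_def by auto

lemma Fr_simple: "Fr i (Suc i) = F i"
  unfolding Fij_def by simp

lemma Fr_step_right:
  assumes "i < j"
  shows "Fr i (Suc j) = F j * Fr i j - q_of j * Fr i j * F j"
proof -
  obtain d where d: "j - i = Suc d" using assms by (cases "j - i") auto
  have "Suc j - i = Suc (Suc d)" "i + Suc d = j" using d assms by simp_all
  then show ?thesis unfolding Fij_def d by (simp add: Let_def q_of_def qq_def Q_def Qi_def)
qed

lemma Fr_step_left:
  assumes "1 \<le> i" "Suc (Suc i) \<le> j" "j \<le> N"
  shows "Fr i j = Fr (Suc i) j * F i - q_of (Suc i) * F i * Fr (Suc i) j"
  using assms(2) assms
proof (induction j rule: dec_induct)
  case base
  have "Fr i (Suc (Suc i)) = F (Suc i) * F i - q_of (Suc i) * F i * F (Suc i)"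
    by (simp add: Fr_step_right Fr_simple)
  then show ?case by (simp add: Fr_simple)
next
  case (step n)
  have h1: "F n * F i = F i * F n" using step by (intro F_far_commute) auto
  have e1: "Fr i (Suc n) = F n * Fr i n - q_of n * Fr i n * F n" using step by (intro Fr_step_right) auto
  have e2: "Fr (Suc i) (Suc n) = F n * Fr (Suc i) n - q_of n * Fr (Suc i) n * F n" using step by (intro Fr_step_right) auto
  have ih: "Fr i n = Fr (Suc i) n * F i - q_of (Suc i) * F i * Fr (Suc i) n" using step by auto
  show ?case unfolding e1 e2 ih
    by (simp add: algebra_simps h1 commute_left_comm[OF h1]
        q_of_left_comm[of "F i"] q_of_left_comm[of "F n"] q_of_left_comm[of "Fr (Suc i) n"] q_of_left_comm[of "q_of n"])
qed

lemma F_commutes_distant: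
  assumes "1 \<le> i" "i < j" "j \<le> N" "1 \<le> c" "c < N" "c + 1 < i \<or> j < c"
  shows "F c * Fr i j = Fr i j * F c"
proof -
  have "Suc i \<le> j" using assms by simp
  then show ?thesis using assms
  proof (induction j rule: dec_induct)
    case base
    have "F c * F i = F i * F c" using base by (intro F_far_commute) auto
    then show ?case by (simp add: Fr_simple)
  next
    case (step j)
    have h1: "F c * F j = F j * F c" using step by (intro F_far_commute) auto
    have h2: "F c * Fr i j = Fr i j * F c" using step by auto
    show ?case using step(1)
      by (simp add: Fr_step_right algebra_simps h1 h2 commute_left_comm[OF h1] commute_left_comm[OF h2]
        q_of_left_comm[of "F c"] q_of_left_comm[of "F j"] q_of_left_comm[of "Fr i j"])
  qed
qed

lemma serre_right_end:
  assumes "1 \<le> i" "i < j" "j < N" "j \<noteq> m"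
  shows "serre (F j) (Fr i j) = 0"
proof (cases "j = Suc i")
  case True
  then show ?thesis using assms by (simp add: Fr_simple F_serre)
next
  case False
  then obtain j' where j': "j = Suc j'" "i < j'" using assms by (cases j) auto
  have c: "F j * Fr i j' = Fr i j' * F j" using assms j' by (intro F_commutes_distant) auto
  have s: "serre (F j) (F j') = 0" using assms j' by (intro F_serre) auto
  show ?thesis unfolding j'(1) Fr_step_right[OF j'(2)] serre_diff mult.assoc serre_scalar[OF q_of_central]
    using c s j' by (simp add: serre_mult_right serre_mult_left mult.assoc[symmetric])
qed

lemma serre_left_end:
  assumes "2 \<le> i" "i < j" "j \<le> N" "i - 1 \<noteq> m"
  shows "serre (F (i - 1)) (Fr i j) = 0"
proof -
  have "Suc i \<le> j" using assms by simp
  then show ?thesis using assms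
  proof (induction j rule: dec_induct)
    case base
    then show ?case by (simp add: Fr_simple F_serre)
  next
    case (step j)
    have c: "F (i - 1) * F j = F j * F (i - 1)" using step by (intro F_far_commute) auto
    have ih: "serre (F (i - 1)) (Fr i j) = 0" using step by auto
    have e: "Fr i (Suc j) = F j * Fr i j - q_of j * (Fr i j * F j)" using step by (simp add: Fr_step_right mult.assoc)
    show ?case unfolding e serre_diff serre_scalar[OF q_of_central] using c ih
      by (simp add: serre_mult_right serre_mult_left)
  qed
qed

(* $F_c$ commutes with $F_{st}$ whenever $s < c$ and $c + 1 < t$ (and $F_c$ is even):
   the base case $t = c + 2$ uses the two Serre relations of $F_c$ with its neighbours. *)
lemma F_commutes_inner_base:
  assumes "1 \<le> s" "s < c" "c + 2 \<le> N" "c \<noteq> m"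
  shows "F c * Fr s (c + 2) = Fr s (c + 2) * F c"
proof -
  have "s \<le> c - 1" using assms by simp
  then show ?thesis using assms
  proof (induction s rule: inc_induct)
    case base
    have same_q: "q_of (Suc c) = q_of c" using base by (simp add: q_of_def)
    have Su: "serre (F c) (F (c - 1)) = 0" using base by (intro F_serre) auto
    have Sw: "serre (F c) (F (Suc c)) = 0" using base by (intro F_serre) auto
    have uw: "F (c - 1) * F (Suc c) = F (Suc c) * F (c - 1)" using base by (intro F_far_commute) auto
    have e1: "Fr (c - 1) (c + 2) = F (Suc c) * Fr (c - 1) (Suc c) - q_of (Suc c) * Fr (c - 1) (Suc c) * F (Suc c)"
      using Fr_step_right[of "c - 1" "Suc c"] base by simp
    have e2: "Fr (c - 1) (Suc c) = F c * F (c - 1) - q_of c * F (c - 1) * F c"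
      using Fr_step_right[of "c - 1" "c"] Fr_simple[of "c - 1"] base by simp
    show ?case unfolding e1 e2 same_q
      by (rule serre_nested_commutator[OF q_of_cases Su Sw uw])
  next
    case (step s)
    have e: "Fr s (c + 2) = Fr (Suc s) (c + 2) * F s - q_of (Suc s) * F s * Fr (Suc s) (c + 2)"
      using step by (intro Fr_step_left) auto
    have h1: "F c * Fr (Suc s) (c + 2) = Fr (Suc s) (c + 2) * F c" using step by auto
    have h2: "F c * F s = F s * F c" using step by (intro F_far_commute) auto
    show ?case unfolding e by (rule commute_q_commutator[OF h1 h2 q_of_central])
  qed
qed

lemma F_commutes_inner:
  assumes "1 \<le> s" "s < c" "c + 2 \<le> t" "t \<le> N" "c \<noteq> m"
  shows "F c * Fr s t = Fr s t * F c"
  using assms(3) assms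
proof (induction t rule: dec_induct)
  case base
  then show ?case by (intro F_commutes_inner_base) auto
next
  case (step t)
  have e: "Fr s (Suc t) = F t * Fr s t - q_of t * Fr s t * F t" using step by (intro Fr_step_right) auto
  have h1: "F c * F t = F t * F c" using step by (intro F_far_commute) auto
  have h2: "F c * Fr s t = Fr s t * F c" using step by auto
  show ?case unfolding e by (rule commute_q_commutator[OF h1 h2 q_of_central])
qed

lemma odd_root_square_zero_first_column:
  assumes "1 \<le> i" "i \<le> m" "m < N"
  shows "Fr i (Suc m) * Fr i (Suc m) = 0"
  using assms(2) assms
proof (induction i rule: inc_induct)
  case base
  then show ?case by (simp add: Fr_simple F_odd_square)
next
  case (step i)
  have e: "Fr i (Suc m) = Fr (Suc i) (Suc m) * F i - Q * F i * Fr (Suc i) (Suc m)"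
    using Fr_step_left[of i "Suc m"] step by (simp add: q_of_le)
  have S: "serre (F (Suc i - 1)) (Fr (Suc i) (Suc m)) = 0" using step by (intro serre_left_end) auto
  have GG: "Fr (Suc i) (Suc m) * Fr (Suc i) (Suc m) = 0" using step by auto
  show ?case unfolding e using q_commutator_square_zero(2)[OF GG] S by simp
qed

lemma odd_root_square_zero:
  assumes "1 \<le> i" "i \<le> m" "m < k" "k \<le> N"
  shows "Fr i k * Fr i k = 0"
proof -
  have "Suc m \<le> k" using assms by simp
  then show ?thesis using assms
  proof (induction k rule: dec_induct)
    case base
    then show ?case by (intro odd_root_square_zero_first_column) auto
  next
    case (step k)
    have e: "Fr i (Suc k) = F k * Fr i k - Qi * Fr i k * F k" using step by (simp add: Fr_step_right q_of_gt)
    have S: "serre (F k) (Fr i k) = 0" using step by (intro serre_right_end) auto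
    have GG: "Fr i k * Fr i k = 0" using step by auto
    show ?case unfolding e using q_commutator_square_zero(1)[OF GG S] by simp
  qed
qed

lemma same_column_relation:
  assumes "1 \<le> s" "s < i" "i \<le> m" "m < k" "k \<le> N"
  shows "Fr i k * Fr s k = (- Q) * (Fr s k * Fr i k)"
proof -
  have "s \<le> i - 1" using assms by simp
  then show ?thesis using assms
  proof (induction s rule: inc_induct)
    case base
    have e: "Fr (i - 1) k = Fr i k * F (i - 1) - Q * F (i - 1) * Fr i k"
      using Fr_step_left[of "i - 1" k] base by (simp add: q_of_le)
    have GG: "Fr i k * Fr i k = 0" using base by (intro odd_root_square_zero) auto
    have GG2: "Fr i k * (Fr i k * y) = 0" for y using GG by (simp add: mult.assoc[symmetric])
    show ?case unfolding e
      by (simp add: algebra_simps GG GG2 qcomm[of "F (i - 1)"] qcomm[of "Fr i k"])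
  next
    case (step s)
    have e: "Fr s k = Fr (Suc s) k * F s - Q * F s * Fr (Suc s) k"
      using Fr_step_left[of s k] step by (simp add: q_of_le)
    have "F s * Fr i k = Fr i k * F s" using step by (intro F_commutes_distant) auto
    then have gf: "Fr i k * F s = F s * Fr i k" by simp
    have ih: "Fr i k * Fr (Suc s) k = (- Q) * (Fr (Suc s) k * Fr i k)" using step by auto
    show ?case unfolding e by (rule skew_commute_extend(2)[OF gf ih _ Q_central]) (simp add: Q_central)
  qed
qed

lemma same_row_relation:
  assumes "1 \<le> i" "i \<le> m" "m < k" "k < t" "t \<le> N"
  shows "Fr i k * Fr i t = (- Q) * (Fr i t * Fr i k)"
proof -
  have "Suc k \<le> t" using assms by simp
  then show ?thesis using assms
  proof (induction t rule: dec_induct)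
    case base
    have e: "Fr i (Suc k) = F k * Fr i k - Qi * Fr i k * F k" using base by (simp add: Fr_step_right q_of_gt)
    have GG: "Fr i k * Fr i k = 0" using base by (intro odd_root_square_zero) auto
    have GG2: "Fr i k * (Fr i k * y) = 0" for y using GG by (simp add: mult.assoc[symmetric])
    show ?case unfolding e
      by (simp add: algebra_simps GG GG2 qcomm[of "F k"] qcomm[of "Fr i k"] Q_Qi_cancel)
  next
    case (step t)
    have e: "Fr i (Suc t) = F t * Fr i t - Qi * Fr i t * F t" using step by (simp add: Fr_step_right q_of_gt)
    have "F t * Fr i k = Fr i k * F t" using step by (intro F_commutes_distant) auto
    then have gf: "Fr i k * F t = F t * Fr i k" by simp
    have ih: "Fr i k * Fr i t = (- Q) * (Fr i t * Fr i k)" using step by auto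
    show ?case unfolding e by (rule skew_commute_extend(1)[OF gf ih _ Qi_central]) (simp add: Q_central)
  qed
qed

(* First for $k = m + 1$, by downward induction on $i$ starting from the super Serre
   relation, then for all $k$ by induction to the right. *)
lemma cross_relation_first_column:
  assumes "1 \<le> i" "Suc i \<le> m" "Suc (Suc m) \<le> N"
  shows "Fr i (Suc m) * Fr (Suc i) (Suc (Suc m)) + Fr (Suc i) (Suc (Suc m)) * Fr i (Suc m)
      = (Qi - Q) * Fr i (Suc (Suc m)) * Fr (Suc i) (Suc m)"
proof -
  have "i \<le> m - 1" using assms by simp
  then show ?thesis using assms
  proof (induction i rule: inc_induct)
    case base
    have m1: "Suc (m - 1) = m" using base by simp
    have n2: "2 \<le> n" using assms by simp
    have hL: "Fr (m - 1) (Suc m) = F m * F (m - 1) - Q * F (m - 1) * F m"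
      using Fr_step_right[of "m - 1" m] Fr_simple[of "m - 1"] base m1 by (simp add: q_of_le)
    have hR: "Fr m (Suc (Suc m)) = F (Suc m) * F m - Qi * F m * F (Suc m)"
      using Fr_step_right[of m "Suc m"] Fr_simple[of m] by (simp add: q_of_gt)
    have hO: "Fr (m - 1) (Suc (Suc m)) = F (Suc m) * Fr (m - 1) (Suc m) - Qi * Fr (m - 1) (Suc m) * F (Suc m)"
      using Fr_step_right[of "m - 1" "Suc m"] base by (simp add: q_of_gt)
    have hyp: "Fr (m - 1) (Suc (Suc m)) * F m + F m * Fr (m - 1) (Suc (Suc m)) = 0"
      using F_odd_super_serre base n2 by (simp add: numeral_2_eq_2)
    have xz: "F (m - 1) * F (Suc m) = F (Suc m) * F (m - 1)" using base assms by (intro F_far_commute) auto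
    have "Fr (m - 1) (Suc m) * Fr m (Suc (Suc m)) + Fr m (Suc (Suc m)) * Fr (m - 1) (Suc m)
       = (Qi - Q) * Fr (m - 1) (Suc (Suc m)) * F m"
      by (rule cross_relation_base[OF F_odd_square xz hL hR hO hyp])
    then show ?case using m1 Fr_simple[of m] by simp
  next
    case (step i)
    have hO: "Fr i (Suc m) = Fr (Suc i) (Suc m) * F i - Q * F i * Fr (Suc i) (Suc m)"
      using Fr_step_left[of i "Suc m"] step assms by (simp add: q_of_le)
    have hD: "Fr (Suc i) (Suc (Suc m)) = Fr (Suc (Suc i)) (Suc (Suc m)) * F (Suc i) - Q * F (Suc i) * Fr (Suc (Suc i)) (Suc (Suc m))"
      using Fr_step_left[of "Suc i" "Suc (Suc m)"] step assms by (simp add: q_of_le)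
    have hP: "Fr i (Suc (Suc m)) = Fr (Suc i) (Suc (Suc m)) * F i - Q * F i * Fr (Suc i) (Suc (Suc m))"
      using Fr_step_left[of i "Suc (Suc m)"] step assms by (simp add: q_of_le)
    have hE: "Fr (Suc i) (Suc m) = Fr (Suc (Suc i)) (Suc m) * F (Suc i) - Q * F (Suc i) * Fr (Suc (Suc i)) (Suc m)"
      using Fr_step_left[of "Suc i" "Suc m"] step assms by (simp add: q_of_le)
    have wO: "F (Suc i) * Fr i (Suc m) = Fr i (Suc m) * F (Suc i)" using step assms by (intro F_commutes_inner) auto
    have wP: "F (Suc i) * Fr i (Suc (Suc m)) = Fr i (Suc (Suc m)) * F (Suc i)" using step assms by (intro F_commutes_inner) auto
    have xB: "F i * Fr (Suc (Suc i)) (Suc (Suc m)) = Fr (Suc (Suc i)) (Suc (Suc m)) * F i" using step assms by (intro F_commutes_distant) auto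
    have xE: "F i * Fr (Suc (Suc i)) (Suc m) = Fr (Suc (Suc i)) (Suc m) * F i" using step assms by (intro F_commutes_distant) auto
    have IH: "Fr (Suc i) (Suc m) * Fr (Suc (Suc i)) (Suc (Suc m)) + Fr (Suc (Suc i)) (Suc (Suc m)) * Fr (Suc i) (Suc m)
        = (Qi - Q) * Fr (Suc i) (Suc (Suc m)) * Fr (Suc (Suc i)) (Suc m)" using step by auto
    show ?case by (rule cross_relation_step_left[OF hO hD hP hE wO wP xB xE IH])
  qed
qed

lemma cross_relation:
  assumes "1 \<le> i" "Suc i \<le> m" "m < k" "Suc k \<le> N"
  shows "Fr i k * Fr (Suc i) (Suc k) + Fr (Suc i) (Suc k) * Fr i k = (Qi - Q) * Fr i (Suc k) * Fr (Suc i) k"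
proof -
  have "Suc m \<le> k" using assms by simp
  then show ?thesis using assms
  proof (induction k rule: dec_induct)
    case base
    then show ?case by (intro cross_relation_first_column) auto
  next
    case (step k)
    have hA: "Fr (Suc i) (Suc k) = F k * Fr (Suc i) k - Qi * Fr (Suc i) k * F k"
      using Fr_step_right[of "Suc i" k] step by (simp add: q_of_gt)
    have hO0: "Fr i (Suc k) = F k * Fr i k - Qi * Fr i k * F k"
      using Fr_step_right[of i k] step by (simp add: q_of_gt)
    have hA': "Fr (Suc i) (Suc (Suc k)) = F (Suc k) * Fr (Suc i) (Suc k) - Qi * Fr (Suc i) (Suc k) * F (Suc k)"
      using Fr_step_right[of "Suc i" "Suc k"] step by (simp add: q_of_gt)
    have hO: "Fr i (Suc (Suc k)) = F (Suc k) * Fr i (Suc k) - Qi * Fr i (Suc k) * F (Suc k)"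
      using Fr_step_right[of i "Suc k"] step by (simp add: q_of_gt)
    have zL: "F (Suc k) * Fr i k = Fr i k * F (Suc k)" using step by (intro F_commutes_distant) auto
    have za: "F (Suc k) * Fr (Suc i) k = Fr (Suc i) k * F (Suc k)" using step by (intro F_commutes_distant) auto
    have yA: "F k * Fr (Suc i) (Suc (Suc k)) = Fr (Suc i) (Suc (Suc k)) * F k" using step by (intro F_commutes_inner) auto
    have yO: "F k * Fr i (Suc (Suc k)) = Fr i (Suc (Suc k)) * F k" using step by (intro F_commutes_inner) auto
    have IH: "Fr i k * Fr (Suc i) (Suc k) + Fr (Suc i) (Suc k) * Fr i k = (Qi - Q) * Fr i (Suc k) * Fr (Suc i) k"
      using step by auto
    show ?case by (rule cross_relation_step_right[OF hA hO0 hA' hO zL za yA yO IH])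
  qed
qed

lemma adjacent_anticommute:
  assumes "1 \<le> i" "Suc i \<le> m" "m < k" "Suc k \<le> N"
  shows "Fr (Suc i) k * Fr i (Suc k) + Fr i (Suc k) * Fr (Suc i) k = 0"
proof -
  have hA': "Fr (Suc i) (Suc k) = F k * Fr (Suc i) k - Qi * Fr (Suc i) k * F k"
    using Fr_step_right[of "Suc i" k] assms by (simp add: q_of_gt)
  have hO: "Fr i (Suc k) = F k * Fr i k - Qi * Fr i k * F k"
    using Fr_step_right[of i k] assms by (simp add: q_of_gt)
  have AO: "Fr (Suc i) k * Fr i k = (- Q) * (Fr i k * Fr (Suc i) k)" using assms by (intro same_column_relation) auto
  show ?thesis by (rule anticommute_of_cross_relation[OF hA' hO AO cross_relation[OF assms]])
qed

lemma nested_anticommute_adjacent_row: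
  assumes "1 \<le> s" "Suc s \<le> m" "m < k" "k < t" "t \<le> N"
  shows "Fr (Suc s) k * Fr s t = (- 1) * (Fr s t * Fr (Suc s) k)"
  using Suc_leI[OF assms(4)] assms
proof (induction t rule: dec_induct)
  case base
  have "Fr (Suc s) k * Fr s (Suc k) + Fr s (Suc k) * Fr (Suc s) k = 0"
    using base by (intro adjacent_anticommute) auto
  then show ?case by (simp add: eq_neg_iff_add_eq_0)
next
  case (step t)
  have e: "Fr s (Suc t) = F t * Fr s t - Qi * Fr s t * F t"
    using Fr_step_right[of s t] step by (simp add: q_of_gt)
  have "F t * Fr (Suc s) k = Fr (Suc s) k * F t" using step by (intro F_commutes_distant) auto
  then have gf: "Fr (Suc s) k * F t = F t * Fr (Suc s) k" by simp
  have ih: "Fr (Suc s) k * Fr s t = (- 1) * (Fr s t * Fr (Suc s) k)" using step by auto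
  show ?case unfolding e by (rule skew_commute_extend(1)[OF gf ih _ Qi_central]) simp
qed

lemma nested_anticommute:
  assumes "1 \<le> s" "s < i" "i \<le> m" "m < k" "k < t" "t \<le> N"
  shows "Fr i k * Fr s t = (- 1) * (Fr s t * Fr i k)"
proof -
  have "s \<le> i - 1" using assms by simp
  then show ?thesis using assms
  proof (induction s rule: inc_induct)
    case base
    then show ?case using nested_anticommute_adjacent_row[of "i - 1" k t] by simp
  next
    case (step s)
    have e: "Fr s t = Fr (Suc s) t * F s - Q * F s * Fr (Suc s) t"
      using Fr_step_left[of s t] step by (simp add: q_of_le)
    have "F s * Fr i k = Fr i k * F s" using step by (intro F_commutes_distant) auto
    then have gf: "Fr i k * F s = F s * Fr i k" by simp
    have ih: "Fr i k * Fr (Suc s) t = (- 1) * (Fr (Suc s) t * Fr i k)" using step by auto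
    show ?case unfolding e by (rule skew_commute_extend(2)[OF gf ih _ Q_central]) simp
  qed
qed

lemma crossing_relation_adjacent_row:
  assumes "1 \<le> i" "Suc i \<le> m" "m < k" "k < t" "t \<le> N"
  shows "Fr i k * Fr (Suc i) t = (- 1) * (Fr (Suc i) t * Fr i k) + (Qi - Q) * Fr i t * Fr (Suc i) k"
  using Suc_leI[OF assms(4)] assms
proof (induction t rule: dec_induct)
  case base
  have "Fr i k * Fr (Suc i) (Suc k) + Fr (Suc i) (Suc k) * Fr i k = (Qi - Q) * Fr i (Suc k) * Fr (Suc i) k"
    using base by (intro cross_relation) auto
  then show ?case by (simp add: algebra_simps)
next
  case (step t)
  have hH: "Fr (Suc i) (Suc t) = F t * Fr (Suc i) t - Qi * Fr (Suc i) t * F t"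
    using Fr_step_right[of "Suc i" t] step by (simp add: q_of_gt)
  have hJ: "Fr i (Suc t) = F t * Fr i t - Qi * Fr i t * F t"
    using Fr_step_right[of i t] step by (simp add: q_of_gt)
  have fg: "F t * Fr i k = Fr i k * F t" using step by (intro F_commutes_distant) auto
  have fK: "F t * Fr (Suc i) k = Fr (Suc i) k * F t" using step by (intro F_commutes_distant) auto
  have ih: "Fr i k * Fr (Suc i) t = (- 1) * (Fr (Suc i) t * Fr i k) + (Qi - Q) * Fr i t * Fr (Suc i) k"
    using step by auto
  show ?case by (rule crossing_relation_step_right[OF fg fK hH hJ ih])
qed

lemma crossing_relation:
  assumes "1 \<le> i" "i < s" "s \<le> m" "m < k" "k < t" "t \<le> N"
  shows "Fr i k * Fr s t = (- 1) * (Fr s t * Fr i k) + (Qi - Q) * Fr i t * Fr s k"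
proof -
  have "i \<le> s - 1" using assms by simp
  then show ?thesis using assms
  proof (induction i rule: inc_induct)
    case base
    then show ?case using crossing_relation_adjacent_row[of "s - 1" k t] by simp
  next
    case (step i)
    have hg: "Fr i k = Fr (Suc i) k * F i - Q * F i * Fr (Suc i) k"
      using Fr_step_left[of i k] step by (simp add: q_of_le)
    have hJ: "Fr i t = Fr (Suc i) t * F i - Q * F i * Fr (Suc i) t"
      using Fr_step_left[of i t] step by (simp add: q_of_le)
    have fH: "F i * Fr s t = Fr s t * F i" using step by (intro F_commutes_distant) auto
    have fK: "F i * Fr s k = Fr s k * F i" using step by (intro F_commutes_distant) auto
    have ih: "Fr (Suc i) k * Fr s t = (- 1) * (Fr s t * Fr (Suc i) k) + (Qi - Q) * Fr (Suc i) t * Fr s k"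
      using step by auto
    show ?case by (rule crossing_relation_step_left[OF fH fK hg hJ ih])
  qed
qed

(* Straightening rule: for $(s,t) \prec (i,k)$ in $\mathcal I_1$, moving $F_{ik}$ to the right
   of $F_{st}$ costs at most a term with left factor $F_{it}$, which is absent when
   $t = k$; otherwise $t > k$, so that $(i,t) \prec (i,k)$. *)
lemma straightening:
  assumes p: "(i, k) \<in> I1 m n" and r: "(s, t) \<in> I1 m n" and pr: "prec (s, t) (i, k)"
  shows "\<exists>y z. Fr i k * Fr s t = Fr s t * y + Fr i t * z \<and> (t = k \<longrightarrow> z = 0)"
proof -
  from p r have a: "1 \<le> i" "i \<le> m" "m < k" "k \<le> N" "1 \<le> s" "s \<le> m" "m < t" "t \<le> N"
    unfolding I1_def by auto
  from pr have b: "k < t \<or> (t = k \<and> s < i)" unfolding prec_def by auto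
  have mc: "(- Q) * (X * Y) = X * ((- Q) * Y)" for X Y by (simp add: qcomm[of X])
  have m1: "(- 1) * (X * Y) = X * ((- 1) * Y)" for X Y :: 'a by simp
  have c3: "(Qi - Q) * X * Y = X * ((Qi - Q) * Y)" for X Y by (simp add: algebra_simps qcomm[of X])
  show ?thesis
  proof (cases "t = k")
    case True
    then have "s < i" using b by simp
    then have "Fr i k * Fr s t = Fr s t * ((- Q) * Fr i k) + Fr i t * 0"
      using same_column_relation[of s i k] a True mc by simp
    then show ?thesis using True by blast
  next
    case False
    then have kt: "k < t" using b by simp
    consider "s = i" | "s < i" | "i < s" by linarith
    then show ?thesis
    proof cases
      case 1
      then have "Fr i k * Fr s t = Fr s t * ((- Q) * Fr i k) + Fr i t * 0"
        using same_row_relation[of i k t] a kt mc by simp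
      then show ?thesis using False by blast
    next
      case 2
      then have "Fr i k * Fr s t = Fr s t * ((- 1) * Fr i k) + Fr i t * 0"
        using nested_anticommute[of s i k t] a kt m1 by simp
      then show ?thesis using False by blast
    next
      case 3
      then have "Fr i k * Fr s t = Fr s t * ((- 1) * Fr i k) + Fr i t * ((Qi - Q) * Fr s k)"
        using crossing_relation[of i s k t] a kt m1 c3 by simp
      then show ?thesis using False by blast
    qed
  qed
qed

end

lemma sorted_by_key_unique:
  fixes key :: "'a \<Rightarrow> 'b::linorder"
  assumes key: "inj key" and S: "finite S"
  shows "\<exists>!xs. set xs = S \<and> sorted_wrt (\<lambda>x y. key x < key y) xs"
proof (rule ex_ex1I)
  obtain L where L: "set L = S" "distinct L" using finite_distinct_list[OF S] by blast
  let ?xs = "sort_key key L"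
  have "sorted (map key ?xs)" "distinct (map key ?xs)"
    using L(2) key by (simp_all add: distinct_map inj_on_def)
  then have "sorted_wrt (<) (map key ?xs)" by (simp add: strict_sorted_iff)
  then show "\<exists>xs. set xs = S \<and> sorted_wrt (\<lambda>x y. key x < key y) xs"
    using L(1) by (intro exI[of _ ?xs]) (simp add: sorted_wrt_map)
next
  fix xs ys
  assume "set xs = S \<and> sorted_wrt (\<lambda>x y. key x < key y) xs"
    and "set ys = S \<and> sorted_wrt (\<lambda>x y. key x < key y) ys"
  then have "sorted_wrt (<) (map key xs)" "sorted_wrt (<) (map key ys)"
    and "set (map key ys) = set (map key xs)" by (simp_all add: sorted_wrt_map)
  then have "map key ys = map key xs" by (rule strict_sorted_equal)
  then show "xs = ys" using key by (simp add: inj_map_eq_map)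
qed

definition prec_key :: "nat \<times> nat \<Rightarrow> int \<times> nat" where
  "prec_key r = (- int (snd r), fst r)"

(* The order $\prec$ on $\mathcal I_1$ is the lexicographic order of the key $(-j, i)$; hence
   every finite set of index pairs has a unique $\prec$-sorted enumeration. *)
lemma prec_as_key: "prec = (\<lambda>p r. prec_key p < prec_key r)"
  by (intro ext) (auto simp: prec_def prec_key_def less_prod_def')

lemma inj_prec_key: "inj prec_key"
  by (auto simp: inj_def prec_key_def)

lemma sorted_prec_unique: "finite S \<Longrightarrow> \<exists>!xs. set xs = S \<and> sorted_wrt prec xs"
  unfolding prec_as_key by (rule sorted_by_key_unique[OF inj_prec_key])

lemma prec_trans: "prec a b \<Longrightarrow> prec b c \<Longrightarrow> prec a c"
  and prec_irrefl: "\<not> prec a a"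
  unfolding prec_def by auto

definition initial_segment :: "nat \<Rightarrow> nat \<Rightarrow> (nat \<times> nat) set \<Rightarrow> bool" where
  "initial_segment m n S \<longleftrightarrow> S \<subseteq> I1 m n \<and> (\<forall>r\<in>S. \<forall>r'\<in>I1 m n. prec r' r \<longrightarrow> r' \<in> S)"

lemma finite_I1: "finite (I1 m n)"
proof (rule finite_subset)
  show "I1 m n \<subseteq> {1..m} \<times> {m<..m + n}" unfolding I1_def by auto
qed simp

lemma initial_segment_prec: "initial_segment m n {r \<in> I1 m n. prec r p}"
  and initial_segment_preceq: "initial_segment m n {r \<in> I1 m n. preceq r p}"
  unfolding initial_segment_def preceq_def prec_def by auto

lemma initial_segment_snoc:
  assumes sorted: "sorted_wrt prec (xs @ [p])" and seg: "initial_segment m n (set (xs @ [p]))"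
  shows "initial_segment m n (set xs)"
    and "r \<in> I1 m n \<Longrightarrow> prec r p \<Longrightarrow> r \<in> set xs"
proof -
  have before: "\<forall>r\<in>set xs. prec r p" using sorted by (simp add: sorted_wrt_append)
  have closed: "r \<in> set xs" if "r \<in> I1 m n" "prec r p" for r
  proof -
    have "r \<in> set (xs @ [p])" using seg that unfolding initial_segment_def by simp
    moreover have "r \<noteq> p" using that(2) prec_irrefl by blast
    ultimately show ?thesis by simp
  qed
  then show "r \<in> I1 m n \<Longrightarrow> prec r p \<Longrightarrow> r \<in> set xs" .
  have "set xs \<subseteq> I1 m n" using seg by (simp add: initial_segment_def)
  then show "initial_segment m n (set xs)"
    unfolding initial_segment_def using closed before prec_trans by blast
qed

context UQ
begin

definition root_product :: "(nat \<times> nat) list \<Rightarrow> 'a" where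
  "root_product xs = prod_list (map (\<lambda>(a, b). Fr a b) xs)"

lemma F_set_root_product:
  assumes "finite S"
  obtains xs where "set xs = S" "sorted_wrt prec xs" "F_set \<iota> m F S = root_product xs"
proof
  let ?xs = "THE xs. set xs = S \<and> sorted_wrt prec xs"
  show "set ?xs = S" "sorted_wrt prec ?xs" using theI'[OF sorted_prec_unique[OF assms]] by simp_all
  show "F_set \<iota> m F S = root_product ?xs" unfolding F_set_def root_product_def ..
qed

lemma annihilator_extends:
  assumes ik: "(i, k) \<in> I1 m n" and st: "(s, t) \<in> I1 m n" and before: "prec (s, t) (i, k)"
    and kills_st: "X * Fr s t = 0" and kills_it: "k < t \<Longrightarrow> X * Fr i t = 0"
  shows "X * Fr i k * Fr s t = 0"
proof -
  obtain y z where yz: "Fr i k * Fr s t = Fr s t * y + Fr i t * z" and z: "t = k \<longrightarrow> z = 0"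
    using straightening[OF ik st before] by blast
  have "X * Fr i t * z = 0"
  proof (cases "t = k")
    case False
    then have "k < t" using before by (simp add: prec_def)
    then show ?thesis using kills_it by simp
  qed (use z in simp)
  then have "X * (Fr i k * Fr s t) = 0"
    unfolding yz using kills_st by (simp add: distrib_left mult.assoc[symmetric])
  then show ?thesis by (simp add: mult.assoc)
qed

lemma sorted_root_product_annihilates:
  assumes "sorted_wrt prec xs" "initial_segment m n (set xs)"
  shows "\<forall>(s, t)\<in>set xs. root_product xs * Fr s t = 0"
  using assms
proof (induction xs rule: rev_induct)
  case Nil
  then show ?case by simp
next
  case (snoc p xs)
  obtain i k where p: "p = (i, k)" by (cases p)
  have sorted: "sorted_wrt prec xs" and before: "\<forall>r\<in>set xs. prec r p"
    using snoc.prems(1) by (auto simp: sorted_wrt_append)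
  have ik: "(i, k) \<in> I1 m n" and sub: "set xs \<subseteq> I1 m n"
    using snoc.prems(2) p by (auto simp: initial_segment_def)
  note closed = initial_segment_snoc(2)[OF snoc.prems]
  have IH: "\<forall>(s, t)\<in>set xs. root_product xs * Fr s t = 0"
    using snoc.IH[OF sorted initial_segment_snoc(1)[OF snoc.prems]] .
  have product: "root_product (xs @ [p]) = root_product xs * Fr i k"
    unfolding root_product_def p by simp
  show ?case
  proof (clarify)
    fix s t assume "(s, t) \<in> set (xs @ [p])"
    then consider "(s, t) = (i, k)" | "(s, t) \<in> set xs" using p by auto
    then show "root_product (xs @ [p]) * Fr s t = 0"
    proof cases
      case 1
      then have "Fr i k * Fr s t = 0" using ik unfolding I1_def by (auto intro: odd_root_square_zero)
      then show ?thesis unfolding product by (simp add: mult.assoc)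
    next
      case 2
      have st: "(s, t) \<in> I1 m n" and "prec (s, t) (i, k)" using 2 sub before p by auto
      moreover have "root_product xs * Fr i t = 0" if "k < t"
      proof -
        have "(i, t) \<in> I1 m n" using ik st unfolding I1_def by auto
        moreover have "prec (i, t) p" using that p by (simp add: prec_def)
        ultimately have "(i, t) \<in> set xs" by (rule closed)
        then show ?thesis using IH by auto
      qed
      ultimately show ?thesis unfolding product using ik 2 IH by (intro annihilator_extends) auto
    qed
  qed
qed

lemma F_set_annihilates:
  assumes "initial_segment m n S" and "(s, t) \<in> S"
  shows "F_set \<iota> m F S * Fr s t = 0"
proof -
  have "finite S" using assms(1) finite_I1 finite_subset unfolding initial_segment_def by blast
  then obtain xs where "set xs = S" "sorted_wrt prec xs" "F_set \<iota> m F S = root_product xs"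
    by (rule F_set_root_product)
  then show ?thesis using sorted_root_product_annihilates assms by auto
qed

end

theorem lemma5p3:
  fixes m n :: nat and \<iota> :: "Cq \<Rightarrow> 'a::ring_1"
    and K Kinv E F :: "nat \<Rightarrow> 'a"
  assumes "1 \<le> m" and "1 \<le> n"
    and "uq_relations m n \<iota> K Kinv E F"
    and "(i, k) \<in> I1 m n"
  shows "(\<forall>s t. (s, t) \<in> I1 m n \<and> preceq (s, t) (i, k) \<longrightarrow> F_le \<iota> m n F (i, k) * Fij \<iota> m F s t = 0) \<and>
         (\<forall>s t. (s, t) \<in> I1 m n \<and> prec (s, t) (i, k) \<longrightarrow> F_lt \<iota> m n F (i, k) * Fij \<iota> m F s t = 0)"
proof -
  interpret UQ m n \<iota> K Kinv E F by (rule UQ.intro) fact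
  show ?thesis unfolding F_le_def F_lt_def
    using F_set_annihilates[OF initial_segment_preceq] F_set_annihilates[OF initial_segment_prec] by blast
qed

end
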